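(* Fix a prompt $\mathbf{x}$, a finite set $\mathcal{Y}$ of responses, a reference policy $\pi_{\mathrm{ref}}(\cdot\mid\mathbf{x})$ with $\pi_{\mathrm{ref}}(\mathbf{y}\mid\mathbf{x})>0$ for all $\mathbf{y}\in\mathcal{Y}$, a reward function $r(\mathbf{x},\mathbf{y})\in\mathbb{R}$, a coefficient $\beta>0$, and a differentiably parameterized family of policies $\pi_\theta(\cdot\mid\mathbf{x})$ with $\pi_\theta(\mathbf{y}\mid\mathbf{x})>0$ for all $\mathbf{y}$. Define $$w(\mathbf{x},\mathbf{y})=\frac{\exp(r(\mathbf{x},\mathbf{y})/\beta)}{\sum_{\mathbf{y}'}\pi_{\mathrm{ref}}(\mathbf{y}'\mid\mathbf{x})\exp(r(\mathbf{x},\mathbf{y}')/\beta)},\qquad \hat w(\mathbf{x},\mathbf{y})=\frac{\pi_\theta(\mathbf{y}\mid\mathbf{x})/\pi_{\mathrm{ref}}(\mathbf{y}\mid\mathbf{x})}{\sum_{\mathbf{y}'}\pi_{\mathrm{ref}}(\mathbf{y}'\mid\mathbf{x})\,\big(\pi_\theta(\mathbf{y}'\mid\mathbf{x})/\pi_{\mathrm{ref}}(\mathbf{y}'\mid\mathbf{x})\big)},$$ and let $$\mathcal{L}_1(\theta)=-\mathbb{E}_{\mathbf{y}\sim\pi_{\mathrm{ref}}(\cdot\mid\mathbf{x})}\big[w(\mathbf{x},\mathbf{y})\log \hat w(\mathbf{x},\mathbf{y})\big]$$ (the first term of the Cal-DPO population loss) and $$\mathcal{L}_{\mathrm{MLE}}(\theta)=-\mathbb{E}_{\mathbf{y}\sim\pi_{\mathrm{ref}}(\cdot\mid\mathbf{x})}\big[w(\mathbf{x},\mathbf{y})\log\pi_\theta(\mathbf{y}\mid\mathbf{x})\big].$$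 Then minimizing $\mathcal{L}_1$ over $\theta$ is equivalent to minimizing $\mathcal{L}_{\mathrm{MLE}}$, i.e. to minimizing the forward KL divergence $\mathbb{D}_{\mathrm{KL}}[\pi^*(\cdot\mid\mathbf{x})\,\|\,\pi_\theta(\cdot\mid\mathbf{x})]$ (the two objectives differ by a quantity not depending on $\theta$), and the negative gradient of $\mathcal{L}_1$ has the contrastive form $$-\nabla_\theta\mathcal{L}_1(\theta)=\mathbb{E}_{\mathbf{y}\sim\pi_{\mathrm{ref}}(\cdot\mid\mathbf{x})}\Big[\big(w(\mathbf{x},\mathbf{y})-\hat w(\mathbf{x},\mathbf{y})\big)\nabla_\theta\log\pi_\theta(\mathbf{y}\mid\mathbf{x})\Big].$$
   Context: Here $\pi^*(\mathbf{y}\mid\mathbf{x})=\pi_{\mathrm{ref}}(\mathbf{y}\mid\mathbf{x})\exp(r(\mathbf{x},\mathbf{y})/\beta)/Z(\mathbf{x})$ with $Z(\mathbf{x})=\sum_{\mathbf{y}}\pi_{\mathrm{ref}}(\mathbf{y}\mid\mathbf{x})\exp(r(\mathbf{x},\mathbf{y})/\beta)$ is the optimal KL-regularized policy, so that $w(\mathbf{x},\mathbf{y})=\pi^*(\mathbf{y}\mid\mathbf{x})/\pi_{\mathrm{ref}}(\mathbf{y}\mid\mathbf{x})$. Expectations over $\pi_{\mathrm{ref}}$ are finite sums $\sum_{\mathbf{y}\in\mathcal{Y}}\pi_{\mathrm{ref}}(\mathbf{y}\mid\mathbf{x})(\cdot)$. *)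

theory Defs
  imports "HOL-Analysis.Analysis"
begin

text \<open>Fixed prompt x is suppressed: all quantities are functions of the response y only.
  pref = reference policy, r = reward, p theta = policy pi_theta, Y = finite response set.\<close>

definition Zr :: "'b set \<Rightarrow> ('b \<Rightarrow> real) \<Rightarrow> ('b \<Rightarrow> real) \<Rightarrow> real \<Rightarrow> real" where
  "Zr Y pref r \<beta> = (\<Sum>y'\<in>Y. pref y' * exp (r y' / \<beta>))"

definition wt :: "'b set \<Rightarrow> ('b \<Rightarrow> real) \<Rightarrow> ('b \<Rightarrow> real) \<Rightarrow> real \<Rightarrow> 'b \<Rightarrow> real" where
  "wt Y pref r \<beta> y = exp (r y / \<beta>) / Zr Y pref r \<beta>"

definition what :: "'b set \<Rightarrow> ('b \<Rightarrow> real) \<Rightarrow> ('a \<Rightarrow> 'b \<Rightarrow> real) \<Rightarrow> 'a \<Rightarrow> 'b \<Rightarrow> real" where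
  "what Y pref p \<theta> y =
     (p \<theta> y / pref y) / (\<Sum>y'\<in>Y. pref y' * (p \<theta> y' / pref y'))"

definition pistar :: "'b set \<Rightarrow> ('b \<Rightarrow> real) \<Rightarrow> ('b \<Rightarrow> real) \<Rightarrow> real \<Rightarrow> 'b \<Rightarrow> real" where
  "pistar Y pref r \<beta> y = pref y * exp (r y / \<beta>) / Zr Y pref r \<beta>"

definition L1 :: "'b set \<Rightarrow> ('b \<Rightarrow> real) \<Rightarrow> ('b \<Rightarrow> real) \<Rightarrow> real \<Rightarrow> ('a \<Rightarrow> 'b \<Rightarrow> real) \<Rightarrow> 'a \<Rightarrow> real" where
  "L1 Y pref r \<beta> p \<theta> = - (\<Sum>y\<in>Y. pref y * (wt Y pref r \<beta> y * ln (what Y pref p \<theta> y)))"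

definition LMLE :: "'b set \<Rightarrow> ('b \<Rightarrow> real) \<Rightarrow> ('b \<Rightarrow> real) \<Rightarrow> real \<Rightarrow> ('a \<Rightarrow> 'b \<Rightarrow> real) \<Rightarrow> 'a \<Rightarrow> real" where
  "LMLE Y pref r \<beta> p \<theta> = - (\<Sum>y\<in>Y. pref y * (wt Y pref r \<beta> y * ln (p \<theta> y)))"

definition KL :: "'b set \<Rightarrow> ('b \<Rightarrow> real) \<Rightarrow> ('b \<Rightarrow> real) \<Rightarrow> real" where
  "KL Y P Q = (\<Sum>y\<in>Y. P y * ln (P y / Q y))"

end

theory Submission
  imports Defs
begin

text \<open>Since \<open>\<pi>\<^sub>\<theta>\<close> sums to one, the normaliser of \<open>\<hat>w\<close> is \<open>1\<close>, so
  \<open>log \<hat>w = log \<pi>\<^sub>\<theta> - log \<pi>\<^sub>r\<^sub>e\<^sub>f\<close> and \<open>\<L>\<^sub>1\<close> differs from \<open>\<L>\<^sub>M\<^sub>L\<^sub>E\<close> by a term free of \<open>\<theta>\<close>.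
  Likewise \<open>\<pi>\<^sup>* = \<pi>\<^sub>r\<^sub>e\<^sub>f w\<close> turns the forward KL divergence into \<open>\<L>\<^sub>M\<^sub>L\<^sub>E\<close> plus the negative
  entropy of \<open>\<pi>\<^sup>*\<close>. For the gradient, \<open>\<pi>\<^sub>r\<^sub>e\<^sub>f \<hat>w \<nabla>log \<pi>\<^sub>\<theta> = \<nabla>\<pi>\<^sub>\<theta>\<close>, and these sum to the
  gradient of the constant \<open>1\<close>, i.e. to zero; subtracting them from
  \<open>-\<nabla>\<L>\<^sub>M\<^sub>L\<^sub>E = \<Sum> \<pi>\<^sub>r\<^sub>e\<^sub>f w \<nabla>log \<pi>\<^sub>\<theta>\<close> gives the contrastive form.\<close>

lemma GDERIV_sum:
  assumes "\<And>i. i \<in> I \<Longrightarrow> GDERIV (f i) x :> D i"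
  shows "GDERIV (\<lambda>x. \<Sum>i\<in>I. f i x) x :> (\<Sum>i\<in>I. D i)"
  using assms unfolding gderiv_def inner_sum_right by (rule has_derivative_sum)

lemma GDERIV_unique:
  assumes "GDERIV f x :> D" and "GDERIV f x :> E"
  shows "D = E"
proof -
  have "(\<lambda>h. inner h D) = (\<lambda>h. inner h E)"
    using assms unfolding gderiv_def by (rule has_derivative_unique)
  then have "inner (D - E) D = inner (D - E) E" by metis
  then have "inner (D - E) (D - E) = 0" by (simp add: inner_diff_right)
  then show ?thesis by simp
qed

lemma GDERIV_ln:
  assumes "GDERIV f x :> D" and "f x > 0"
  shows "GDERIV (\<lambda>x. ln (f x)) x :> (1 / f x) *\<^sub>R D"
  using GDERIV_DERIV_compose[OF assms(1) DERIV_ln[OF assms(2)]]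
  by (simp add: divide_inverse)

lemma GDERIV_sum_eq_0_if_sum_const:
  assumes "\<And>i. i \<in> I \<Longrightarrow> GDERIV (f i) x :> D i" and "\<And>t. (\<Sum>i\<in>I. f i t) = c"
  shows "(\<Sum>i\<in>I. D i) = 0"
proof (rule GDERIV_unique)
  show "GDERIV (\<lambda>t. \<Sum>i\<in>I. f i t) x :> (\<Sum>i\<in>I. D i)"
    using assms(1) by (rule GDERIV_sum)
  show "GDERIV (\<lambda>t. \<Sum>i\<in>I. f i t) x :> 0"
    unfolding assms(2) by (rule GDERIV_const)
qed

lemma what_eq_ratio:
  assumes "\<forall>y\<in>Y. pref y \<noteq> 0" and "(\<Sum>y\<in>Y. p \<theta> y) = 1"
  shows "what Y pref p \<theta> y = p \<theta> y / pref y"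
proof -
  have "(\<Sum>y'\<in>Y. pref y' * (p \<theta> y' / pref y')) = (\<Sum>y'\<in>Y. p \<theta> y')"
    using assms(1) by (intro sum.cong) auto
  then show ?thesis using assms(2) unfolding what_def by simp
qed

lemma L1_eq_LMLE_plus_const:
  assumes "\<forall>y\<in>Y. pref y > 0" and "\<forall>y\<in>Y. p \<theta> y > 0" and "(\<Sum>y\<in>Y. p \<theta> y) = 1"
  shows "L1 Y pref r \<beta> p \<theta>
       = LMLE Y pref r \<beta> p \<theta> + (\<Sum>y\<in>Y. pref y * (wt Y pref r \<beta> y * ln (pref y)))"
proof -
  have nz: "\<forall>y\<in>Y. pref y \<noteq> 0" using assms(1) by auto
  have "ln (what Y pref p \<theta> y) = ln (p \<theta> y) - ln (pref y)" if "y \<in> Y" for y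
    unfolding what_eq_ratio[of Y pref p \<theta>, OF nz assms(3)]
    using assms(1,2) that by (intro ln_divide_pos) blast+
  then have "L1 Y pref r \<beta> p \<theta> = - (\<Sum>y\<in>Y. pref y * (wt Y pref r \<beta> y * ln (p \<theta> y))
                                   - pref y * (wt Y pref r \<beta> y * ln (pref y)))"
    unfolding L1_def by (intro arg_cong[where f = uminus] sum.cong refl) (simp add: right_diff_distrib)
  then show ?thesis unfolding LMLE_def by (simp add: sum_subtractf)
qed

lemma Zr_pos:
  assumes "finite Y" and "Y \<noteq> {}" and "\<forall>y\<in>Y. pref y > 0"
  shows "Zr Y pref r \<beta> > 0"
  unfolding Zr_def using assms by (intro sum_pos) auto

lemma pistar_eq_pref_wt: "pistar Y pref r \<beta> y = pref y * wt Y pref r \<beta> y"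
  unfolding pistar_def wt_def by simp

lemma KL_pistar_eq_LMLE_plus_const:
  assumes "finite Y" and "Y \<noteq> {}" and "\<forall>y\<in>Y. pref y > 0" and "\<forall>y\<in>Y. p \<theta> y > 0"
  shows "KL Y (pistar Y pref r \<beta>) (p \<theta>)
       = LMLE Y pref r \<beta> p \<theta> + (\<Sum>y\<in>Y. pistar Y pref r \<beta> y * ln (pistar Y pref r \<beta> y))"
proof -
  have "pistar Y pref r \<beta> y > 0" if "y \<in> Y" for y
    using Zr_pos[OF assms(1-3)] assms(3) that unfolding pistar_def by simp
  then have "KL Y (pistar Y pref r \<beta>) (p \<theta>)
      = (\<Sum>y\<in>Y. pistar Y pref r \<beta> y * ln (pistar Y pref r \<beta> y)
                - pref y * (wt Y pref r \<beta> y * ln (p \<theta> y)))"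
    unfolding KL_def using assms(4)
    by (intro sum.cong) (auto simp: ln_div algebra_simps pistar_eq_pref_wt)
  then show ?thesis unfolding LMLE_def by (simp add: sum_subtractf)
qed

lemma GDERIV_neg_LMLE:
  assumes "\<forall>y\<in>Y. p \<theta> y > 0" and "\<forall>y\<in>Y. GDERIV (\<lambda>t. p t y) \<theta> :> D y"
  shows "GDERIV (\<lambda>t. - LMLE Y pref r \<beta> p t) \<theta> :>
           (\<Sum>y\<in>Y. (pref y * wt Y pref r \<beta> y) *\<^sub>R ((1 / p \<theta> y) *\<^sub>R D y))"
proof -
  have "GDERIV (\<lambda>t. pref y * wt Y pref r \<beta> y * ln (p t y)) \<theta> :>
           (pref y * wt Y pref r \<beta> y) *\<^sub>R ((1 / p \<theta> y) *\<^sub>R D y)" if "y \<in> Y" for y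
    using GDERIV_mult[OF GDERIV_const[of "pref y * wt Y pref r \<beta> y"]
        GDERIV_ln[OF assms(2)[rule_format, OF that] assms(1)[rule_format, OF that]]]
    by simp
  then have "GDERIV (\<lambda>t. \<Sum>y\<in>Y. pref y * wt Y pref r \<beta> y * ln (p t y)) \<theta> :>
           (\<Sum>y\<in>Y. (pref y * wt Y pref r \<beta> y) *\<^sub>R ((1 / p \<theta> y) *\<^sub>R D y))"
    by (rule GDERIV_sum)
  then show ?thesis unfolding LMLE_def by (simp add: mult.assoc)
qed

lemma GDERIV_neg_L1:
  assumes pref_pos: "\<forall>y\<in>Y. pref y > 0" and p_pos: "\<forall>t. \<forall>y\<in>Y. p t y > 0"
    and p_sum: "\<forall>t. (\<Sum>y\<in>Y. p t y) = 1" and p_deriv: "\<forall>y\<in>Y. GDERIV (\<lambda>t. p t y) \<theta> :> D y"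
  shows "GDERIV (\<lambda>t. - L1 Y pref r \<beta> p t) \<theta> :>
           (\<Sum>y\<in>Y. (pref y * (wt Y pref r \<beta> y - what Y pref p \<theta> y)) *\<^sub>R ((1 / p \<theta> y) *\<^sub>R D y))"
proof -
  let ?w = "wt Y pref r \<beta>" and ?C = "\<Sum>y\<in>Y. pref y * (wt Y pref r \<beta> y * ln (pref y))"
  have "(\<lambda>t. - L1 Y pref r \<beta> p t) = (\<lambda>t. - LMLE Y pref r \<beta> p t - ?C)"
    using pref_pos p_pos p_sum by (simp add: L1_eq_LMLE_plus_const)
  moreover have "GDERIV (\<lambda>t. - LMLE Y pref r \<beta> p t - ?C) \<theta> :>
      (\<Sum>y\<in>Y. (pref y * ?w y) *\<^sub>R ((1 / p \<theta> y) *\<^sub>R D y)) - 0"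
    using p_pos p_deriv by (intro GDERIV_diff GDERIV_const GDERIV_neg_LMLE) auto
  moreover have "(\<Sum>y\<in>Y. D y) = 0"
    using p_sum p_deriv by (intro GDERIV_sum_eq_0_if_sum_const[of Y "\<lambda>y t. p t y" \<theta> D 1]) auto
  moreover have "(\<Sum>y\<in>Y. (pref y * (?w y - what Y pref p \<theta> y)) *\<^sub>R ((1 / p \<theta> y) *\<^sub>R D y))
      = (\<Sum>y\<in>Y. (pref y * ?w y) *\<^sub>R ((1 / p \<theta> y) *\<^sub>R D y)) - (\<Sum>y\<in>Y. D y)"
  proof -
    have nz: "\<forall>y\<in>Y. pref y \<noteq> 0" using pref_pos by auto
    have "(pref y * what Y pref p \<theta> y) *\<^sub>R ((1 / p \<theta> y) *\<^sub>R D y) = D y" if "y \<in> Y" for y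
    proof -
      have "p \<theta> y \<noteq> 0" using p_pos that by (metis less_irrefl)
      with nz that show ?thesis by (simp add: what_eq_ratio[of Y pref p \<theta>, OF nz spec[OF p_sum]])
    qed
    then have "(pref y * (?w y - what Y pref p \<theta> y)) *\<^sub>R ((1 / p \<theta> y) *\<^sub>R D y)
        = (pref y * ?w y) *\<^sub>R ((1 / p \<theta> y) *\<^sub>R D y) - D y" if "y \<in> Y" for y
      using that by (simp only: right_diff_distrib scaleR_diff_left)
    then show ?thesis unfolding sum_subtractf[symmetric] by (intro sum.cong refl)
  qed
  ultimately show ?thesis by simp
qed

theorem theorem1:
  fixes Y :: "'b set" and pref r :: "'b \<Rightarrow> real" and \<beta> :: real
    and p :: "'a::real_inner \<Rightarrow> 'b \<Rightarrow> real" and g :: "'a \<Rightarrow> 'b \<Rightarrow> 'a"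
  assumes finY: "finite Y" and neY: "Y \<noteq> {}"
    and pref_pos: "\<forall>y\<in>Y. pref y > 0" and pref_sum: "(\<Sum>y\<in>Y. pref y) = 1"
    and beta_pos: "\<beta> > 0"
    and p_pos: "\<forall>\<theta>. \<forall>y\<in>Y. p \<theta> y > 0" and p_sum: "\<forall>\<theta>. (\<Sum>y\<in>Y. p \<theta> y) = 1"
    and p_diff: "\<forall>\<theta>. \<forall>y\<in>Y. GDERIV (\<lambda>t. p t y) \<theta> :> g \<theta> y"
  shows "(\<exists>c. \<forall>\<theta>. L1 Y pref r \<beta> p \<theta> = LMLE Y pref r \<beta> p \<theta> + c)
       \<and> (\<exists>c. \<forall>\<theta>. KL Y (pistar Y pref r \<beta>) (p \<theta>) = LMLE Y pref r \<beta> p \<theta> + c)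
       \<and> (\<forall>\<theta>. GDERIV (\<lambda>t. - L1 Y pref r \<beta> p t) \<theta> :>
             (\<Sum>y\<in>Y. (pref y * (wt Y pref r \<beta> y - what Y pref p \<theta> y))
                        *\<^sub>R ((1 / p \<theta> y) *\<^sub>R g \<theta> y)))"
proof (intro conjI)
  show "\<exists>c. \<forall>\<theta>. L1 Y pref r \<beta> p \<theta> = LMLE Y pref r \<beta> p \<theta> + c"
    using L1_eq_LMLE_plus_const[where p = p, OF pref_pos] p_pos p_sum by blast
  show "\<exists>c. \<forall>\<theta>. KL Y (pistar Y pref r \<beta>) (p \<theta>) = LMLE Y pref r \<beta> p \<theta> + c"
    using KL_pistar_eq_LMLE_plus_const[where p = p, OF finY neY pref_pos] p_pos by blast
  show "\<forall>\<theta>. GDERIV (\<lambda>t. - L1 Y pref r \<beta> p t) \<theta> :>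
          (\<Sum>y\<in>Y. (pref y * (wt Y pref r \<beta> y - what Y pref p \<theta> y))
                     *\<^sub>R ((1 / p \<theta> y) *\<^sub>R g \<theta> y))"
    by (intro allI GDERIV_neg_L1) (use pref_pos p_pos p_sum p_diff in auto)
qed

end
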